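(* Let $t\ge 2$, let $n_1,\dots,n_t$ be positive integers, and let $G=K_{n_1,\dots,n_t}$ be the complete $t$-partite graph with partite sets $V_1,\dots,V_t$, $|V_i|=n_i$. Let $N_t=\{1,\dots,t\}$ and $f(I)=\sum_{i\in I}n_i$ for $I\subseteq N_t$. Let $p$ be a positive integer with $f(N_t)>p$. Let $D$ be an optimal $\gamma_p(G)$-set, let $\ell=\min\{|D_i|: i\in N_t\setminus I_D\}$, $A=\{i\in N_t\setminus I_D: |D_i|=\ell+1\}$, and $\delta_A=0$ if $A=\emptyset$, $\delta_A=1$ otherwise. Then $\gamma_p(G)\ge p+\ell+\delta_A$.
   Context: A set $S\subseteq V(G)$ is a $p$-dominating set of $G$ if every vertex $v\in V(G)\setminus S$ has at least $p$ neighbors in $S$. The $p$-domination number $\gamma_p(G)$ is the minimum cardinality of a $p$-dominating set of $G$, and a $\gamma_p(G)$-set is a $p$-dominating set of cardinality $\gamma_p(G)$. For $D\subseteq V(G)$ write $D_i=V_i\cap D$ for $i\in N_t$ and $I_D=\{i\in N_t: |D_i|=|V_i|\}$. For a $\gamma_p(G)$-set $D$ with $|I_D|<t$ define $$\mu(D)=\sum_{i\in N_t\setminus I_D}\left|\,|D_i|-\frac{|D|-f(I_D)}{t-|I_D|}\right|.$$ A $\gamma_p(G)$-set $D$ is optimal if: (1) $f(I_D)<p$; (2) $|I_D|\ge |I_S|$ for every $\gamma_p(G)$-set $S$; (3) $\mu(D)\le\mu(S)$ for every $\gamma_p(G)$-set $S$ with $I_S=I_D$. *)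

theory Defs
  imports Complex_Main
begin

definition p_dominating :: "'a set \<Rightarrow> ('a \<Rightarrow> 'a \<Rightarrow> bool) \<Rightarrow> nat \<Rightarrow> 'a set \<Rightarrow> bool" where
  "p_dominating V adj p S \<longleftrightarrow> S \<subseteq> V \<and> (\<forall>v \<in> V - S. card {u \<in> S. adj v u} \<ge> p)"

definition gamma_p :: "'a set \<Rightarrow> ('a \<Rightarrow> 'a \<Rightarrow> bool) \<Rightarrow> nat \<Rightarrow> nat" where
  "gamma_p V adj p = (LEAST k. \<exists>S. p_dominating V adj p S \<and> card S = k)"

definition gamma_p_set :: "'a set \<Rightarrow> ('a \<Rightarrow> 'a \<Rightarrow> bool) \<Rightarrow> nat \<Rightarrow> 'a set \<Rightarrow> bool" where
  "gamma_p_set V adj p S \<longleftrightarrow> p_dominating V adj p S \<and> card S = gamma_p V adj p"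

text \<open>Complete t-partite graph K_{n_1,...,n_t}: vertex (i,k) lies in part V_i, i in {1..t}, k < n i;
  two vertices are adjacent iff they lie in different parts.\<close>
definition part :: "(nat \<Rightarrow> nat) \<Rightarrow> nat \<Rightarrow> (nat \<times> nat) set" where
  "part n i = {(i, k) | k. k < n i}"

definition cmp_V :: "nat \<Rightarrow> (nat \<Rightarrow> nat) \<Rightarrow> (nat \<times> nat) set" where
  "cmp_V t n = (\<Union>i\<in>{1..t}. part n i)"

definition cmp_adj :: "nat \<times> nat \<Rightarrow> nat \<times> nat \<Rightarrow> bool" where
  "cmp_adj u v \<longleftrightarrow> fst u \<noteq> fst v"

definition fI :: "(nat \<Rightarrow> nat) \<Rightarrow> nat set \<Rightarrow> nat" where
  "fI n I = (\<Sum>i\<in>I. n i)"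

definition I_of :: "nat \<Rightarrow> (nat \<Rightarrow> nat) \<Rightarrow> (nat \<times> nat) set \<Rightarrow> nat set" where
  "I_of t n D = {i \<in> {1..t}. card (part n i \<inter> D) = card (part n i)}"

definition mu :: "nat \<Rightarrow> (nat \<Rightarrow> nat) \<Rightarrow> (nat \<times> nat) set \<Rightarrow> real" where
  "mu t n D = (\<Sum>i\<in>{1..t} - I_of t n D.
      \<bar>real (card (part n i \<inter> D)) -
        (real (card D) - real (fI n (I_of t n D))) / (real t - real (card (I_of t n D)))\<bar>)"

definition optimal :: "nat \<Rightarrow> (nat \<Rightarrow> nat) \<Rightarrow> nat \<Rightarrow> (nat \<times> nat) set \<Rightarrow> bool" where
  "optimal t n p D \<longleftrightarrow>
     gamma_p_set (cmp_V t n) cmp_adj p D \<and> card (I_of t n D) < t \<and>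
     fI n (I_of t n D) < p \<and>
     (\<forall>S. gamma_p_set (cmp_V t n) cmp_adj p S \<longrightarrow> card (I_of t n S) \<le> card (I_of t n D)) \<and>
     (\<forall>S. gamma_p_set (cmp_V t n) cmp_adj p S \<and> I_of t n S = I_of t n D \<longrightarrow> mu t n D \<le> mu t n S)"

end

theory Submission
  imports Defs
begin

text \<open>A vertex outside a p-dominating set D of a complete multipartite graph is adjacent to exactly
  the vertices of D outside its own part, so every part V_i not contained in D satisfies
  p + |D_i| \<le> |D|. Applied to a part attaining the minimum l this gives \<gamma>_p \<ge> p + l, and
  applied to a part with |D_i| = l + 1 it gives \<gamma>_p \<ge> p + l + 1.\<close>

lemma part_eq_image: "part n i = (\<lambda>k. (i, k)) ` {..<n i}"
  unfolding part_def by auto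

lemma finite_part: "finite (part n i)"
  unfolding part_eq_image by simp

lemma finite_cmp_V: "finite (cmp_V t n)"
  unfolding cmp_V_def using finite_part by auto

lemma cmp_V_mem_part_fst: "u \<in> cmp_V t n \<Longrightarrow> u \<in> part n (fst u)"
  unfolding cmp_V_def part_def by auto

lemma cmp_adj_neighbours:
  assumes "S \<subseteq> cmp_V t n" and "v \<in> part n i"
  shows "{u \<in> S. cmp_adj v u} = S - part n i"
proof -
  have "fst v = i" using assms(2) unfolding part_def by auto
  moreover have "u \<in> part n i \<longleftrightarrow> fst u = i" if "u \<in> S" for u
    using cmp_V_mem_part_fst[of u t n] that assms(1) unfolding part_def by auto
  ultimately show ?thesis unfolding cmp_adj_def by auto
qed

lemma not_full_part_not_subset:
  assumes "i \<notin> I_of t n D" and "i \<in> {1..t}"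
  shows "\<not> part n i \<subseteq> D"
  using assms unfolding I_of_def by (auto simp: Int_absorb2)

lemma p_dominating_card_part_bound:
  assumes dom: "p_dominating (cmp_V t n) cmp_adj p D"
    and i: "i \<in> {1..t}" and not_sub: "\<not> part n i \<subseteq> D"
  shows "p + card (part n i \<inter> D) \<le> card D"
proof -
  have DV: "D \<subseteq> cmp_V t n" using dom unfolding p_dominating_def by simp
  then have "finite D" using finite_cmp_V finite_subset by blast
  obtain v where v: "v \<in> part n i" "v \<notin> D" using not_sub by auto
  then have "v \<in> cmp_V t n" using i unfolding cmp_V_def by auto
  with dom v have "p \<le> card {u \<in> D. cmp_adj v u}" unfolding p_dominating_def by simp
  also have "\<dots> = card (D - part n i)" using cmp_adj_neighbours[OF DV v(1)] by simp
  also have "\<dots> = card D - card (part n i \<inter> D)"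
    using \<open>finite D\<close> by (simp add: card_Diff_subset_Int Int_commute)
  finally show ?thesis
    using card_mono[OF \<open>finite D\<close>, of "part n i \<inter> D"] by simp
qed

lemma gamma_p_set_card_part_bound:
  assumes "gamma_p_set (cmp_V t n) cmp_adj p D" and "i \<in> {1..t} - I_of t n D"
  shows "p + card (part n i \<inter> D) \<le> gamma_p (cmp_V t n) cmp_adj p"
  using assms p_dominating_card_part_bound not_full_part_not_subset
  unfolding gamma_p_set_def by (metis DiffD1 DiffD2)

lemma atLeastAtMost_Diff_I_of_nonempty:
  assumes "card (I_of t n D) < t"
  shows "{1..t} - I_of t n D \<noteq> {}"
proof
  assume "{1..t} - I_of t n D = {}"
  moreover have "I_of t n D \<subseteq> {1..t}" unfolding I_of_def by auto
  ultimately have "card {1..t} \<le> card (I_of t n D)"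
    by (metis Diff_eq_empty_iff card_mono finite_atLeastAtMost finite_subset)
  with assms show False by simp
qed

theorem lemma6:
  fixes t p :: nat and n :: "nat \<Rightarrow> nat" and D :: "(nat \<times> nat) set"
  assumes "t \<ge> 2"
    and "\<forall>i\<in>{1..t}. n i > 0"
    and "p > 0"
    and "fI n {1..t} > p"
    and "optimal t n p D"
  shows "let l = Min {card (part n i \<inter> D) | i. i \<in> {1..t} - I_of t n D};
             A = {i \<in> {1..t} - I_of t n D. card (part n i \<inter> D) = l + 1};
             \<delta> = (if A = {} then 0 else 1)
         in gamma_p (cmp_V t n) cmp_adj p \<ge> p + l + \<delta>"
proof -
  have D: "gamma_p_set (cmp_V t n) cmp_adj p D" and "card (I_of t n D) < t"
    using assms(5) unfolding optimal_def by auto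
  define l where "l = Min {card (part n i \<inter> D) | i. i \<in> {1..t} - I_of t n D}"
  define A where "A = {i \<in> {1..t} - I_of t n D. card (part n i \<inter> D) = l + 1}"
  have "l \<in> {card (part n i \<inter> D) | i. i \<in> {1..t} - I_of t n D}"
    unfolding l_def using atLeastAtMost_Diff_I_of_nonempty[OF \<open>card (I_of t n D) < t\<close>] by (intro Min_in) auto
  then have "p + l \<le> gamma_p (cmp_V t n) cmp_adj p"
    using gamma_p_set_card_part_bound[OF D] by auto
  moreover have "p + l + 1 \<le> gamma_p (cmp_V t n) cmp_adj p" if "A \<noteq> {}"
    using that gamma_p_set_card_part_bound[OF D] unfolding A_def by fastforce
  ultimately show ?thesis
    unfolding Let_def l_def[symmetric] A_def[symmetric] by auto
qed

end
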